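(* Let $P$ and $Q$ be probability measures on a measurable space $(\mathcal T,\mathscr F)$ with $P\ll Q$, let $M\in(0,\infty)$, and let $\omega(\tau)=\frac{dP}{dQ}(\tau)$ and $\check\omega(\tau)=\min\{M,\omega(\tau)\}$. Then for any $\alpha\in(0,\infty]$ and any $\beta\in[0,1]$, $$\mathbb E_{\tau\sim Q}[\check\omega(\tau)^\alpha]^{1/\alpha}\le M^{1-\beta}d_{\alpha\beta}(P\|Q)^{\beta-\frac1\alpha}.$$ Furthermore, for any $\beta\in[1,\infty]$, $$\mathbb E_{\tau\sim Q}[\omega(\tau)-\check\omega(\tau)]\le\left(\frac{d_\beta(P\|Q)}{M}\right)^{\beta-1}.$$
   Context: For $P\ll Q$ and $\gamma\in[0,\infty]$, the Rényi divergence is $D_\gamma(P\|Q)=\frac{1}{\gamma-1}\log\int(\frac{dP}{dQ})^\gamma dQ$ (with the limiting values at $\gamma=1$, where it equals the KL divergence, and at $\gamma=\infty$, where $D_\infty=\log\operatorname{ess\,sup}\frac{dP}{dQ}$), and the exponentiated Rényi divergence is $d_\gamma(P\|Q)=\exp[D_\gamma(P\|Q)]$. In particular $\mathbb E_Q[(\frac{dP}{dQ})^\gamma]=d_\gamma(P\|Q)^{\gamma-1}$. *)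

theory Defs
  imports "HOL-Probability.Probability"
begin

definition epowr :: "ennreal \<Rightarrow> real \<Rightarrow> ennreal" where
  "epowr x r =
     (if r = 0 then 1
      else if x = \<infinity> then (if r > 0 then \<infinity> else 0)
      else if x = 0 then (if r > 0 then 0 else \<infinity>)
      else ennreal (enn2real x powr r))"

definition eepowr :: "ennreal \<Rightarrow> ereal \<Rightarrow> ennreal" where
  "eepowr x r =
     (if r = \<infinity> then (if x > 1 then \<infinity> else if x = 1 then 1 else 0)
      else epowr x (real_of_ereal r))"

text \<open>Real-valued version of the Radon-Nikodym derivative dP/dQ
(finite Q-a.e.).\<close>
definition rn_density :: "'a measure \<Rightarrow> 'a measure \<Rightarrow> 'a \<Rightarrow> real" where
  "rn_density P Q x = enn2real (RN_deriv Q P x)"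

text \<open>KL divergence KL(P||Q) = \<integral> \<omega> ln \<omega> dQ, as an extended real
(positive part minus negative part; the negative part is always finite).\<close>
definition KL_div :: "'a measure \<Rightarrow> 'a measure \<Rightarrow> ereal" where
  "KL_div P Q =
     enn2ereal (\<integral>\<^sup>+ x. ennreal (rn_density P Q x * max (ln (rn_density P Q x)) 0) \<partial>Q)
   - enn2ereal (\<integral>\<^sup>+ x. ennreal (rn_density P Q x * max (- ln (rn_density P Q x)) 0) \<partial>Q)"

text \<open>Exponentiated Renyi divergence d_\<gamma>(P||Q) = exp D_\<gamma>(P||Q), for \<gamma> \<in> [0,\<infinity>].
For finite \<gamma> \<noteq> 1 it is (\<integral> \<omega>^\<gamma> dQ)^(1/(\<gamma>-1)) (with the convention
0 powr 0 = 0, giving the limiting value D_0 = -log Q(\<omega> > 0));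
d_1 = exp KL, d_\<infinity> = ess sup \<omega>.\<close>
definition exp_renyi :: "'a measure \<Rightarrow> 'a measure \<Rightarrow> ereal \<Rightarrow> ennreal" where
  "exp_renyi P Q \<gamma> =
     (if \<gamma> = \<infinity> then esssup Q (RN_deriv Q P)
      else if \<gamma> = 1 then
        (if KL_div P Q = \<infinity> then \<infinity> else ennreal (exp (real_of_ereal (KL_div P Q))))
      else epowr (\<integral>\<^sup>+ x. ennreal (rn_density P Q x powr real_of_ereal \<gamma>) \<partial>Q)
                 (1 / (real_of_ereal \<gamma> - 1)))"

definition Lp_norm :: "'a measure \<Rightarrow> ('a \<Rightarrow> real) \<Rightarrow> ereal \<Rightarrow> ennreal" where
  "Lp_norm Q f p =
     (if p = \<infinity> then esssup Q (\<lambda>x. ennreal (f x))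
      else epowr (\<integral>\<^sup>+ x. ennreal (f x powr real_of_ereal p) \<partial>Q) (1 / real_of_ereal p))"

end

theory Submission
  imports Defs
begin

(*
  For \<beta> \<in> [0,1] the truncated density satisfies min M \<omega> \<le> M^(1-\<beta>) \<omega>^\<beta> pointwise, and for
  \<beta> \<ge> 1 the excess satisfies \<omega> - min M \<omega> \<le> M^(1-\<beta>) \<omega>^\<beta>. Raising the first bound to the
  power \<alpha> and integrating leaves the moment E_Q[\<omega>^\<gamma>] with \<gamma> = \<alpha>\<beta> (for the second, \<gamma> = \<beta>),
  and every such moment equals d_\<gamma>(P||Q)^(\<gamma>-1). For infinite exponents the moment is replaced
  by the essential supremum d_\<infinity> of \<omega>: if d_\<infinity> \<le> M there is no excess at all, otherwise the
  right-hand side of the second bound is infinite.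
*)

lemma ennreal_powr_le_epowr: "0 \<le> x \<Longrightarrow> 0 \<le> r \<Longrightarrow> ennreal (x powr r) \<le> epowr (ennreal x) r"
  by (auto simp: epowr_def)

lemma epowr_one: "epowr x 1 = x"
  by (cases x rule: ennreal_cases) (auto simp: epowr_def)

lemma epowr_epowr: "epowr (epowr x r) s = epowr x (r * s)"
proof (cases "r = 0 \<or> s = 0")
  case True
  then show ?thesis by (auto simp: epowr_def)
next
  case False
  then show ?thesis
    by (cases x rule: ennreal_cases)
       (auto simp: epowr_def zero_less_mult_iff powr_powr ennreal_neg)
qed

lemma epowr_mult_ennreal:
  "0 < c \<Longrightarrow> epowr (ennreal c * x) r = ennreal (c powr r) * epowr x r"
  by (cases x rule: ennreal_cases)
     (auto simp: epowr_def ennreal_mult_top ennreal_mult[symmetric] powr_mult ennreal_mult_eq_top_iff)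

lemma epowr_mono: "0 \<le> r \<Longrightarrow> x \<le> y \<Longrightarrow> epowr x r \<le> epowr y r"
  by (cases x rule: ennreal_cases; cases y rule: ennreal_cases)
     (auto simp: epowr_def top_unique intro!: powr_mono2)

lemma min_le_powr_interpolation:
  fixes M b x :: real
  assumes "0 < M" "0 \<le> b" "b \<le> 1" "0 \<le> x"
  shows "min M x \<le> M powr (1 - b) * x powr b"
proof (cases "x = 0")
  case False
  let ?m = "min M x"
  have "?m = ?m powr (1 - b) * ?m powr b"
    using False assms by (simp add: powr_add[symmetric])
  also have "\<dots> \<le> M powr (1 - b) * x powr b"
    using False assms by (intro mult_mono powr_mono2) auto
  finally show ?thesis .
qed simp

lemma diff_min_le_powr:
  fixes M c x :: real
  assumes "0 < M" "1 \<le> c" "0 \<le> x"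
  shows "x - min M x \<le> M powr (1 - c) * x powr c"
proof (cases "x \<le> M")
  case False
  then have "x = x powr (1 - c) * x powr c"
    using assms by (simp add: powr_add[symmetric])
  also have "\<dots> \<le> M powr (1 - c) * x powr c"
    using False assms by (intro mult_right_mono powr_mono2') auto
  finally show ?thesis
    using assms by simp
qed simp

lemma Lp_norm_min_le:
  fixes Q :: "'a measure" and f :: "'a \<Rightarrow> real" and M a b :: real
  assumes f: "f \<in> borel_measurable Q" "\<And>x. 0 \<le> f x"
    and "0 < M" "0 < a" "0 \<le> b" "b \<le> 1"
  shows "Lp_norm Q (\<lambda>x. min M (f x)) (ereal a)
           \<le> ennreal (M powr (1 - b)) * epowr (\<integral>\<^sup>+ x. ennreal (f x powr (a * b)) \<partial>Q) (1 / a)"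
proof -
  define c where "c = M powr (a * (1 - b))"
  have "(\<integral>\<^sup>+ x. ennreal (min M (f x) powr a) \<partial>Q) \<le> (\<integral>\<^sup>+ x. ennreal c * ennreal (f x powr (a * b)) \<partial>Q)"
  proof (intro nn_integral_mono)
    fix x
    have "min M (f x) powr a \<le> (M powr (1 - b) * f x powr b) powr a"
      using assms by (intro powr_mono2 min_le_powr_interpolation) auto
    also have "\<dots> = c * f x powr (a * b)"
      using assms by (simp add: c_def powr_mult powr_powr mult.commute)
    finally show "ennreal (min M (f x) powr a) \<le> ennreal c * ennreal (f x powr (a * b))"
      by (simp add: c_def ennreal_mult[symmetric] ennreal_leI)
  qed
  also have "\<dots> = ennreal c * (\<integral>\<^sup>+ x. ennreal (f x powr (a * b)) \<partial>Q)"
    using f by (intro nn_integral_cmult) auto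
  finally have "Lp_norm Q (\<lambda>x. min M (f x)) (ereal a)
                  \<le> epowr (ennreal c * (\<integral>\<^sup>+ x. ennreal (f x powr (a * b)) \<partial>Q)) (1 / a)"
    using assms by (simp add: Lp_norm_def epowr_mono)
  also have "\<dots> = ennreal (M powr (1 - b)) * epowr (\<integral>\<^sup>+ x. ennreal (f x powr (a * b)) \<partial>Q) (1 / a)"
    using assms by (simp add: epowr_mult_ennreal c_def powr_powr)
  finally show ?thesis .
qed

lemma Lp_norm_infinity_min_le:
  fixes Q :: "'a measure" and f :: "'a \<Rightarrow> real" and M b :: real
  assumes f: "f \<in> borel_measurable Q" "\<And>x. 0 \<le> f x"
    and S: "AE x in Q. ennreal (f x) \<le> S"
    and "0 < M" "0 \<le> b" "b \<le> 1"
  shows "Lp_norm Q (\<lambda>x. min M (f x)) \<infinity> \<le> ennreal (M powr (1 - b)) * epowr S b"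
proof -
  have "AE x in Q. ennreal (min M (f x)) \<le> ennreal (M powr (1 - b)) * epowr S b"
    using S
  proof eventually_elim
    case (elim x)
    have "ennreal (min M (f x)) \<le> ennreal (M powr (1 - b)) * ennreal (f x powr b)"
      using assms by (simp add: ennreal_mult[symmetric] ennreal_leI min_le_powr_interpolation)
    also have "\<dots> \<le> ennreal (M powr (1 - b)) * epowr S b"
      using assms elim
      by (intro mult_left_mono order.trans[OF ennreal_powr_le_epowr epowr_mono]) auto
    finally show ?case .
  qed
  then show ?thesis
    using f by (simp add: Lp_norm_def esssup_I)
qed

lemma nn_integral_diff_min_le:
  fixes Q :: "'a measure" and f :: "'a \<Rightarrow> real" and M c :: real
  assumes f: "f \<in> borel_measurable Q" "\<And>x. 0 \<le> f x"
    and "0 < M" "1 \<le> c"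
  shows "(\<integral>\<^sup>+ x. ennreal (f x - min M (f x)) \<partial>Q)
           \<le> ennreal (M powr (1 - c)) * (\<integral>\<^sup>+ x. ennreal (f x powr c) \<partial>Q)"
proof -
  have "(\<integral>\<^sup>+ x. ennreal (f x - min M (f x)) \<partial>Q)
          \<le> (\<integral>\<^sup>+ x. ennreal (M powr (1 - c)) * ennreal (f x powr c) \<partial>Q)"
    using assms by (intro nn_integral_mono)
      (simp add: ennreal_mult[symmetric] ennreal_leI diff_min_le_powr)
  also have "\<dots> = ennreal (M powr (1 - c)) * (\<integral>\<^sup>+ x. ennreal (f x powr c) \<partial>Q)"
    using f by (intro nn_integral_cmult) auto
  finally show ?thesis .
qed

lemma nn_integral_diff_min_eq_0:
  fixes Q :: "'a measure" and f :: "'a \<Rightarrow> real" and M :: real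
  assumes "AE x in Q. f x \<le> M"
  shows "(\<integral>\<^sup>+ x. ennreal (f x - min M (f x)) \<partial>Q) = 0"
proof -
  have "(\<integral>\<^sup>+ x. ennreal (f x - min M (f x)) \<partial>Q) = (\<integral>\<^sup>+ x. 0 \<partial>Q)"
    using assms by (intro nn_integral_cong_AE) (auto elim!: eventually_mono)
  then show ?thesis
    by simp
qed

lemma rn_density_nonneg: "0 \<le> rn_density P Q x"
  by (simp add: rn_density_def)

lemma borel_measurable_rn_density: "rn_density P Q \<in> borel_measurable Q"
  unfolding rn_density_def by measurable

lemma AE_rn_density_le_esssup: "AE x in Q. ennreal (rn_density P Q x) \<le> esssup Q (RN_deriv Q P)"
  using esssup_AE[of "RN_deriv Q P" Q]
  by eventually_elim (simp add: rn_density_def ennreal_enn2real_if)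

lemma nn_integral_rn_density:
  assumes "sigma_finite_measure Q" "sigma_finite_measure P"
    and "absolutely_continuous Q P" "sets P = sets Q"
  shows "(\<integral>\<^sup>+ x. ennreal (rn_density P Q x) \<partial>Q) = emeasure P (space P)"
proof -
  interpret Q: sigma_finite_measure Q by fact
  have "AE x in Q. RN_deriv Q P x = ennreal (rn_density P Q x)"
    using Q.RN_deriv_finite[OF assms(2-4)]
    by eventually_elim (simp add: rn_density_def less_top)
  then have "(\<integral>\<^sup>+ x. ennreal (rn_density P Q x) \<partial>Q) = (\<integral>\<^sup>+ x. RN_deriv Q P x * 1 \<partial>Q)"
    by (intro nn_integral_cong_AE) auto
  also have "\<dots> = (\<integral>\<^sup>+ x. 1 \<partial>P)"
    using assms by (intro Q.RN_deriv_nn_integral[symmetric]) auto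
  finally show ?thesis
    by simp
qed

lemma epowr_exp_renyi:
  assumes "sigma_finite_measure Q" "prob_space P"
    and "absolutely_continuous Q P" "sets P = sets Q"
  shows "epowr (exp_renyi P Q (ereal \<gamma>)) (\<gamma> - 1) = (\<integral>\<^sup>+ x. ennreal (rn_density P Q x powr \<gamma>) \<partial>Q)"
proof (cases "\<gamma> = 1")
  case True
  interpret P: prob_space P by fact
  have "(\<integral>\<^sup>+ x. ennreal (rn_density P Q x) \<partial>Q) = 1"
    using assms nn_integral_rn_density[of Q P] P.emeasure_space_1 P.sigma_finite_measure_axioms
    by simp
  then show ?thesis
    using True by (simp add: epowr_def rn_density_nonneg)
next
  case False
  have "exp_renyi P Q (ereal \<gamma>) = epowr (\<integral>\<^sup>+ x. ennreal (rn_density P Q x powr \<gamma>) \<partial>Q) (1 / (\<gamma> - 1))"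
    using False by (simp add: exp_renyi_def)
  then show ?thesis
    using False by (simp add: epowr_epowr epowr_one)
qed

lemma Lp_norm_min_rn_density_le_exp_renyi:
  fixes P Q :: "'a measure" and M \<beta> :: real and \<alpha> :: ereal
  assumes "prob_space P" "prob_space Q" "sets P = sets Q" "absolutely_continuous Q P"
    and "0 < M" "0 < \<alpha>" "0 \<le> \<beta>" "\<beta> \<le> 1"
  shows "Lp_norm Q (\<lambda>x. min M (rn_density P Q x)) \<alpha>
           \<le> ennreal (M powr (1 - \<beta>))
              * epowr (exp_renyi P Q (\<alpha> * ereal \<beta>))
                      (\<beta> - (if \<alpha> = \<infinity> then 0 else 1 / real_of_ereal \<alpha>))"
proof (cases \<alpha>)
  case (real a)
  then have "0 < a"
    using assms by simp
  have moment: "epowr (exp_renyi P Q (ereal (a * \<beta>))) (a * \<beta> - 1)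
                 = (\<integral>\<^sup>+ x. ennreal (rn_density P Q x powr (a * \<beta>)) \<partial>Q)"
    using assms prob_space_imp_sigma_finite by (intro epowr_exp_renyi) auto
  have "\<beta> - 1 / a = (a * \<beta> - 1) * (1 / a)"
    using \<open>0 < a\<close> by (simp add: field_simps)
  then have "epowr (exp_renyi P Q (ereal (a * \<beta>))) (\<beta> - 1 / a)
               = epowr (\<integral>\<^sup>+ x. ennreal (rn_density P Q x powr (a * \<beta>)) \<partial>Q) (1 / a)"
    by (simp only: epowr_epowr[symmetric] moment)
  moreover have "Lp_norm Q (\<lambda>x. min M (rn_density P Q x)) (ereal a)
      \<le> ennreal (M powr (1 - \<beta>)) * epowr (\<integral>\<^sup>+ x. ennreal (rn_density P Q x powr (a * \<beta>)) \<partial>Q) (1 / a)"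
    using assms \<open>0 < a\<close>
    by (intro Lp_norm_min_le borel_measurable_rn_density rn_density_nonneg) auto
  ultimately show ?thesis
    using real \<open>0 < a\<close> by simp
next
  case PInf
  (* For \<beta> = 0 the ereal product \<infinity> * 0 = 0 selects d_0, not d_\<infinity>; the exponent 0 makes this harmless. *)
  have "epowr (exp_renyi P Q (\<infinity> * ereal \<beta>)) \<beta> = epowr (esssup Q (RN_deriv Q P)) \<beta>"
    using \<open>0 \<le> \<beta>\<close> by (cases "\<beta> = 0") (auto simp: exp_renyi_def epowr_def)
  then show ?thesis
    using PInf assms Lp_norm_infinity_min_le[OF borel_measurable_rn_density rn_density_nonneg
        AE_rn_density_le_esssup, of M \<beta>]
    by simp
qed (use assms in simp)

lemma nn_integral_diff_min_rn_density_le_exp_renyi: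
  fixes P Q :: "'a measure" and M :: real and \<beta> :: ereal
  assumes "prob_space P" "prob_space Q" "sets P = sets Q" "absolutely_continuous Q P"
    and "0 < M" "1 \<le> \<beta>"
  shows "(\<integral>\<^sup>+ x. ennreal (rn_density P Q x - min M (rn_density P Q x)) \<partial>Q)
           \<le> eepowr (exp_renyi P Q \<beta> / ennreal M) (\<beta> - 1)"
proof (cases \<beta>)
  case (real c)
  have moment: "epowr (exp_renyi P Q (ereal c)) (c - 1)
                  = (\<integral>\<^sup>+ x. ennreal (rn_density P Q x powr c) \<partial>Q)"
    using assms prob_space_imp_sigma_finite by (intro epowr_exp_renyi) auto
  have "exp_renyi P Q \<beta> / ennreal M = ennreal (1 / M) * exp_renyi P Q \<beta>"
    using assms by (simp add: divide_ennreal_def inverse_ennreal mult.commute inverse_eq_divide)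
  moreover have "\<beta> - 1 = ereal (c - 1)"
    using real by (simp add: one_ereal_def)
  ultimately have "eepowr (exp_renyi P Q \<beta> / ennreal M) (\<beta> - 1)
                     = epowr (ennreal (1 / M) * exp_renyi P Q (ereal c)) (c - 1)"
    using real by (simp add: eepowr_def)
  also have "\<dots> = ennreal ((1 / M) powr (c - 1)) * epowr (exp_renyi P Q (ereal c)) (c - 1)"
    using assms by (intro epowr_mult_ennreal) simp
  also have "\<dots> = ennreal (M powr (1 - c)) * (\<integral>\<^sup>+ x. ennreal (rn_density P Q x powr c) \<partial>Q)"
    using assms by (simp add: moment powr_divide powr_minus_divide[symmetric])
  finally have "eepowr (exp_renyi P Q \<beta> / ennreal M) (\<beta> - 1)
                  = ennreal (M powr (1 - c)) * (\<integral>\<^sup>+ x. ennreal (rn_density P Q x powr c) \<partial>Q)" .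
  then show ?thesis
    using real assms nn_integral_diff_min_le[OF borel_measurable_rn_density rn_density_nonneg]
    by simp
next
  case PInf
  define S where "S = esssup Q (RN_deriv Q P)"
  show ?thesis
  proof (cases "S \<le> ennreal M")
    case True
    have "AE x in Q. rn_density P Q x \<le> M"
      using AE_rn_density_le_esssup[of P Q]
      by eventually_elim (metis S_def True \<open>0 < M\<close> ennreal_le_iff less_imp_le order.trans)
    then show ?thesis
      by (simp add: nn_integral_diff_min_eq_0)
  next
    case False
    then have "1 < S / ennreal M"
      using assms by (cases S rule: ennreal_cases) (auto simp: divide_ennreal ennreal_top_divide)
    then show ?thesis
      using PInf by (simp add: S_def eepowr_def exp_renyi_def)
  qed
qed (use assms in simp)

theorem lemma1:
  fixes P Q :: "'a measure" and M :: real
  assumes "prob_space P" and "prob_space Q"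
    and "sets P = sets Q"
    and "absolutely_continuous Q P"
    and "M > 0"
  shows "(\<forall>(\<alpha>::ereal) (\<beta>::real). 0 < \<alpha> \<longrightarrow> 0 \<le> \<beta> \<longrightarrow> \<beta> \<le> 1 \<longrightarrow>
            Lp_norm Q (\<lambda>x. min M (rn_density P Q x)) \<alpha>
              \<le> ennreal (M powr (1 - \<beta>))
                 * epowr (exp_renyi P Q (\<alpha> * ereal \<beta>))
                         (\<beta> - (if \<alpha> = \<infinity> then 0 else 1 / real_of_ereal \<alpha>)))
       \<and> (\<forall>\<beta>::ereal. 1 \<le> \<beta> \<longrightarrow>
            (\<integral>\<^sup>+ x. ennreal (rn_density P Q x - min M (rn_density P Q x)) \<partial>Q)
              \<le> eepowr (exp_renyi P Q \<beta> / ennreal M) (\<beta> - 1))"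
  using Lp_norm_min_rn_density_le_exp_renyi[OF assms]
    nn_integral_diff_min_rn_density_le_exp_renyi[OF assms]
  by blast

end
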